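(* For $r>0$ with $r\neq 1$, $0<p<1$, $q=1-p$, and $x\in\{0,1,2,\dots\}$, let $$p_X(x;r,p)=\frac{q^{x}p^{r}}{1+x}\binom{r+x-1}{x}\,{}_2F_1(1,r+x;2+x;q)$$ denote the probability mass function of the $\mathcal{UNB}(r,p)$ distribution. Then $$p_X(x;r,p)=\frac{r}{(r-1)(r+x)p}\Big(\big(2r+x-(r+x)q\big)\,p_X(x;r+1,p)-(r+1)\,p_X(x;r+2,p)\Big).$$
   Context: For real $r>0$, $\binom{r+x-1}{x}=\frac{\Gamma(r+x)}{x!\,\Gamma(r)}$. ${}_2F_1(a,b;c;z)=\sum_{n\ge0}\frac{(a)_n(b)_n}{(c)_n}\frac{z^n}{n!}$ for $|z|<1$, with $(s)_n=s(s+1)\cdots(s+n-1)$, $(s)_0=1$. $\mathcal{UNB}(r,p)$ is the law of $X$ where $N$ is negative binomial with $P(N=n)=\binom{r+n-1}{n}p^rq^n$ and $X\mid N=n$ is uniform on $\{0,\dots,n\}$. *)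

theory Defs
  imports "HOL-Analysis.Analysis"
begin

text \<open>Gauss hypergeometric function 2F1(a,b;c;z) = sum_n (a)_n (b)_n / (c)_n * z^n / n!
  (the series converges for |z| < 1, which is the only range used).\<close>
definition hyp2F1 :: "real \<Rightarrow> real \<Rightarrow> real \<Rightarrow> real \<Rightarrow> real" where
  "hyp2F1 a b c z = (\<Sum>n. pochhammer a n * pochhammer b n / pochhammer c n * z ^ n / fact n)"

text \<open>Generalised binomial coefficient binom(r+x-1, x) = Gamma(r+x) / (x! Gamma(r)) for real r > 0.\<close>
definition nbinom :: "real \<Rightarrow> nat \<Rightarrow> real" where
  "nbinom r x = Gamma (r + real x) / (fact x * Gamma r)"

definition unb_pmf :: "nat \<Rightarrow> real \<Rightarrow> real \<Rightarrow> real" where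
  "unb_pmf x r p = (let q = 1 - p in
     q ^ x * p powr r / (1 + real x) * nbinom r x * hyp2F1 1 (r + real x) (2 + real x) q)"

end

(*
  The pmf is a prefactor q^x p^r binom(r+x-1,x)/(1+x) times 2F1(1, r+x; 2+x; q), and raising r
  by one multiplies the prefactor by p(r+x)/r while raising the second parameter of 2F1 by one.
  So the identity is Gauss's contiguous relation between 2F1(a,b;c;z), 2F1(a,b+1;c;z) and
  2F1(a,b+2;c;z) at a = 1, b = r+x, c = 2+x, z = q. That relation holds term by term up to a
  telescoping sum: with s_n the n-th term of 2F1(a,b;c;z) and f_n = n (c+n-1) s_n, b times the
  n-th term of the combination is f_n - f_{n+1}, and f_n tends to 0 by the ratio test as |z| < 1.
*)

theory Submission
  imports Defs "HOL-Real_Asymp.Real_Asymp"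
begin

definition hyp2F1_term :: "real \<Rightarrow> real \<Rightarrow> real \<Rightarrow> real \<Rightarrow> nat \<Rightarrow> real" where
  "hyp2F1_term a b c z n = pochhammer a n * pochhammer b n / pochhammer c n * z ^ n / fact n"

lemma hyp2F1_eq_suminf: "hyp2F1 a b c z = suminf (hyp2F1_term a b c z)"
  unfolding hyp2F1_def hyp2F1_term_def ..

lemma summable_of_ratio_tendsto:
  fixes t \<rho> :: "nat \<Rightarrow> 'a::{real_normed_field,banach}"
  assumes rec: "eventually (\<lambda>n. t (Suc n) = \<rho> n * t n) sequentially"
    and lim: "\<rho> \<longlonglongrightarrow> c" and c: "norm c < 1"
  shows "summable t"
proof -
  obtain d where d: "norm c < d" "d < 1" using c dense by blast
  have "eventually (\<lambda>n. norm (\<rho> n) < d) sequentially"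
    using order_tendstoD(2)[OF tendsto_norm[OF lim] d(1)] .
  with rec have "eventually (\<lambda>n. t (Suc n) = \<rho> n * t n \<and> norm (\<rho> n) < d) sequentially"
    by (rule eventually_conj)
  then obtain N where N: "\<And>n. n \<ge> N \<Longrightarrow> t (Suc n) = \<rho> n * t n \<and> norm (\<rho> n) < d"
    by (auto simp: eventually_sequentially)
  show ?thesis
  proof (rule summable_ratio_test[of d N, OF d(2)])
    fix n assume "n \<ge> N"
    then show "norm (t (Suc n)) \<le> d * norm (t n)"
      using N[of n] by (simp add: norm_mult mult_right_mono)
  qed
qed

text \<open>The junk value \<open>x / 0 = 0\<close> makes this hold even when \<open>c\<close> is a nonpositive integer.\<close>
lemma hyp2F1_term_Suc:
  "hyp2F1_term a b c z (Suc n) = (a + n) * (b + n) / ((c + n) * (real n + 1)) * z * hyp2F1_term a b c z n"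
  by (cases "pochhammer c n = 0") (auto simp: hyp2F1_term_def pochhammer_rec' field_simps)

lemma summable_hyp2F1_term:
  assumes "\<bar>z\<bar> < 1"
  shows "summable (hyp2F1_term a b c z)"
proof (rule summable_of_ratio_tendsto[where \<rho> = "\<lambda>n. (a + n) * (b + n) / ((c + n) * (real n + 1)) * z"])
  show "eventually (\<lambda>n. hyp2F1_term a b c z (Suc n)
      = (a + n) * (b + n) / ((c + n) * (real n + 1)) * z * hyp2F1_term a b c z n) sequentially"
    by (simp add: hyp2F1_term_Suc)
  have ratio: "(\<lambda>n. (a + n) * (b + n) / ((c + n) * (real n + 1))) \<longlonglongrightarrow> 1"
    by real_asymp
  show "(\<lambda>n. (a + n) * (b + n) / ((c + n) * (real n + 1)) * z) \<longlonglongrightarrow> z"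
    using tendsto_mult_right[OF ratio, of z] by (simp only: mult_1)
qed (use assms in simp)

lemma hyp2F1_term_shift_b:
  "b * hyp2F1_term a (b + 1) c z n = (b + n) * hyp2F1_term a b c z n"
  using pochhammer_rec[of b n] pochhammer_rec'[of b n] by (simp add: hyp2F1_term_def)

lemma hyp2F1_term_Suc_mult:
  fixes a b c z :: real
  assumes "c \<notin> \<int>\<^sub>\<le>\<^sub>0"
  shows "(real n + 1) * (c + n) * hyp2F1_term a b c z (Suc n) = (a + n) * (b + n) * z * hyp2F1_term a b c z n"
proof -
  have "(c + n) * (real n + 1) \<noteq> 0"
    using assms plus_of_nat_eq_0_imp[of c n] by auto
  then show ?thesis
    by (simp add: hyp2F1_term_Suc)
qed

lemma hyp2F1_term_weighted_tendsto_zero: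
  fixes a b c z :: real
  assumes "c \<notin> \<int>\<^sub>\<le>\<^sub>0" "\<bar>z\<bar> < 1"
  shows "(\<lambda>n. n * (c + n - 1) * hyp2F1_term a b c z n) \<longlonglongrightarrow> 0"
proof -
  define f where "f n = n * (c + n - 1) * hyp2F1_term a b c z n" for n
  define \<rho> where "\<rho> n = (a + n) * (b + n) / (n * (c + n - 1)) * z" for n :: nat
  have f_Suc: "f (Suc n) = (a + n) * (b + n) * z * hyp2F1_term a b c z n" for n
    using hyp2F1_term_Suc_mult[OF assms(1), of n a b z] by (simp add: f_def algebra_simps)
  have "f (Suc n) = \<rho> n * f n" if "n \<ge> 1" for n
  proof -
    have "c + real (n - 1) \<noteq> 0"
      using assms(1) plus_of_nat_eq_0_imp[of c "n - 1"] by auto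
    then have "real n * (c + n - 1) \<noteq> 0"
      using that by (simp add: of_nat_diff)
    then show ?thesis
      unfolding f_Suc by (simp add: f_def \<rho>_def)
  qed
  then have rec: "eventually (\<lambda>n. f (Suc n) = \<rho> n * f n) sequentially"
    by (auto simp: eventually_sequentially)
  have ratio: "(\<lambda>n. (a + n) * (b + n) / (n * (c + n - 1))) \<longlonglongrightarrow> 1"
    by real_asymp
  have "\<rho> \<longlonglongrightarrow> z"
    unfolding \<rho>_def using tendsto_mult_right[OF ratio, of z] by (simp only: mult_1)
  with rec have "summable f"
    by (rule summable_of_ratio_tendsto) (simp add: assms(2))
  then show ?thesis
    unfolding f_def[symmetric] by (rule summable_LIMSEQ_zero)
qed

lemma hyp2F1_contiguous_b:
  fixes a b c z :: real
  assumes "c \<notin> \<int>\<^sub>\<le>\<^sub>0" "b \<noteq> 0" "\<bar>z\<bar> < 1"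
  shows "(b + 1 - c) * hyp2F1 a b c z + (c - 2 * b - 2 + (b + 1 - a) * z) * hyp2F1 a (b + 1) c z
    + (b + 1) * (1 - z) * hyp2F1 a (b + 2) c z = 0"
proof -
  define A where "A = c - 2 * b - 2 + (b + 1 - a) * z"
  define s where "s = hyp2F1_term a b c z"
  define f where "f n = n * (c + n - 1) * s n" for n
  define g where "g n = (b + 1 - c) * s n + A * hyp2F1_term a (b + 1) c z n
    + (b + 1) * (1 - z) * hyp2F1_term a (b + 2) c z n" for n
  have shift2: "(b + 1) * b * hyp2F1_term a (b + 2) c z n = (b + 1 + n) * (b + n) * s n" for n
  proof -
    have "(b + 1) * b * hyp2F1_term a (b + 2) c z n = (b + 1 + n) * (b * hyp2F1_term a (b + 1) c z n)"
      using hyp2F1_term_shift_b[of "b + 1" a c z n] by (simp add: ac_simps)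
    then show ?thesis
      by (simp add: hyp2F1_term_shift_b s_def)
  qed
  have f_Suc: "f (Suc n) = (a + n) * (b + n) * z * s n" for n
    using hyp2F1_term_Suc_mult[OF assms(1), of n a b z] unfolding f_def s_def by (simp add: algebra_simps)
  have "b * g n = f n - f (Suc n)" for n
  proof -
    have "b * g n = (b + 1 - c) * b * s n + A * (b * hyp2F1_term a (b + 1) c z n)
        + (1 - z) * ((b + 1) * b * hyp2F1_term a (b + 2) c z n)"
      by (simp add: g_def s_def algebra_simps)
    also have "\<dots> = ((b + 1 - c) * b + A * (b + n) + (1 - z) * (b + 1 + n) * (b + n)) * s n"
      unfolding hyp2F1_term_shift_b shift2 by (simp add: s_def algebra_simps)
    also have "\<dots> = f n - f (Suc n)"
      unfolding f_Suc by (simp add: f_def A_def algebra_simps)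
    finally show ?thesis .
  qed
  moreover have "(\<lambda>n. f n - f (Suc n)) sums 0"
    using telescope_sums'[OF hyp2F1_term_weighted_tendsto_zero[OF assms(1,3)]]
    by (simp add: f_def s_def)
  ultimately have "(\<lambda>n. b * g n) sums 0"
    by simp
  moreover have "(\<lambda>n. b * g n) sums (b * ((b + 1 - c) * hyp2F1 a b c z + A * hyp2F1 a (b + 1) c z
      + (b + 1) * (1 - z) * hyp2F1 a (b + 2) c z))"
    unfolding g_def s_def hyp2F1_eq_suminf
    by (intro sums_mult sums_add summable_sums summable_hyp2F1_term assms(3))
  ultimately show ?thesis
    using assms(2) sums_unique2 by (fastforce simp: A_def)
qed

lemma nbinom_plus1:
  assumes "r > 0"
  shows "nbinom (r + 1) x = (r + x) / r * nbinom r x"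
proof -
  have "Gamma (r + 1) = r * Gamma r" "Gamma (r + x + 1) = (r + x) * Gamma (r + x)"
    using assms by (auto intro!: Gamma_plus1 simp: nonpos_Ints_def)
  then show ?thesis
    using assms by (simp add: nbinom_def add_ac)
qed

definition unb_pmf_factor :: "nat \<Rightarrow> real \<Rightarrow> real \<Rightarrow> real" where
  "unb_pmf_factor x r p = (1 - p) ^ x * p powr r / (1 + real x) * nbinom r x"

lemma unb_pmf_eq_factor:
  "unb_pmf x r p = unb_pmf_factor x r p * hyp2F1 1 (r + real x) (2 + real x) (1 - p)"
  by (simp add: unb_pmf_def unb_pmf_factor_def Let_def)

lemma unb_pmf_factor_plus1:
  assumes "r > 0" "p > 0"
  shows "unb_pmf_factor x (r + 1) p = p * (r + x) / r * unb_pmf_factor x r p"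
  using assms by (simp add: unb_pmf_factor_def nbinom_plus1 powr_add mult_ac)

theorem theorem2:
  fixes r p :: real and x :: nat
  assumes "r > 0" and "r \<noteq> 1" and "0 < p" and "p < 1"
  shows "unb_pmf x r p =
    r / ((r - 1) * (r + real x) * p) *
      ((2 * r + real x - (r + real x) * (1 - p)) * unb_pmf x (r + 1) p
        - (r + 1) * unb_pmf x (r + 2) p)"
proof -
  define a where "a = r + real x"
  define B where "B = 2 * r + real x - a * (1 - p)"
  define F where "F b = hyp2F1 1 b (2 + real x) (1 - p)" for b
  define C where "C = unb_pmf_factor x r p"
  define K where "K = p * a / r * C"
  have nonzero: "r \<noteq> 0" "r - 1 \<noteq> 0" "r + 1 \<noteq> 0" "a \<noteq> 0" "p \<noteq> 0"
    using assms by (auto simp: a_def)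
  have pmf_r: "unb_pmf x r p = C * F a"
    by (simp add: unb_pmf_eq_factor C_def F_def a_def)
  have pmf_r1: "unb_pmf x (r + 1) p = K * F (a + 1)"
    using unb_pmf_factor_plus1[of r p x] assms
    by (simp add: unb_pmf_eq_factor K_def C_def F_def a_def add_ac)
  have pmf_r2: "(r + 1) * unb_pmf x (r + 2) p = K * ((a + 1) * p * F (a + 2))"
    using unb_pmf_factor_plus1[of "r + 1" p x] unb_pmf_factor_plus1[of r p x] assms
    by (simp add: unb_pmf_eq_factor K_def C_def F_def a_def add_ac)
  have "2 + real x \<notin> \<int>\<^sub>\<le>\<^sub>0"
    using nonpos_Ints_nonpos by fastforce
  then have contiguous: "(r - 1) * F a = B * F (a + 1) - (a + 1) * p * F (a + 2)"
    using hyp2F1_contiguous_b[of "2 + real x" a "1 - p" 1] assms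
    by (simp add: B_def F_def a_def algebra_simps)
  have "r / ((r - 1) * a * p) * (B * unb_pmf x (r + 1) p - (r + 1) * unb_pmf x (r + 2) p)
      = r / ((r - 1) * a * p) * K * (B * F (a + 1) - (a + 1) * p * F (a + 2))"
    unfolding pmf_r1 pmf_r2 by (simp add: right_diff_distrib mult_ac)
  also have "\<dots> = C * F a"
    unfolding contiguous[symmetric] using nonzero by (simp add: K_def)
  finally show ?thesis
    unfolding pmf_r a_def[symmetric] B_def[symmetric] by simp
qed

end
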